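(* Let $n\geqslant2$, $m\geqslant1$, let $\tau$ be a cuspidal $\mathrm{R}$-representation of $\mathrm{GL}_n(k_\mathrm{F})$, and let $g\in\mathcal{C}_n$ be a matrix which is not diagonal. Then $$\mathrm{Hom}_{\mathrm{R}[\overline{\mathrm{K}_n\cap g\mathrm{K}_n(m)g^{-1}}]}(1,\tau)=0.$$
   Context: $\mathrm{F}$ non-archimedean local field, ring of integers $\mathfrak{o}_\mathrm{F}$, maximal ideal $\mathfrak{p}_\mathrm{F}=\varpi_\mathrm{F}\mathfrak{o}_\mathrm{F}$, normalized valuation $\mathrm{val}_\mathrm{F}$, residue field $k_\mathrm{F}$ of characteristic $p$. $\mathrm{R}$ algebraically closed of characteristic $\ell\neq p$. $\mathrm{K}_n=\mathrm{GL}_n(\mathfrak{o}_\mathrm{F})$, $\mathrm{K}_n^1=1+\mathrm{M}_n(\mathfrak{p}_\mathrm{F})$; for a subgroup $H\subseteq\mathrm{K}_n$, $\overline H$ is its image in $\mathrm{K}_n/\mathrm{K}_n^1=\mathrm{GL}_n(k_\mathrm{F})$. For $m\geqslant1$, $\mathrm{K}_n(m)=\{\left(\begin{smallmatrix}a&b\\c&d\end{smallmatrix}\right)\in\mathrm{K}_n: c\in\mathrm{M}_{1\times(n-1)}(\mathfrak{p}_\mathrm{F}^m),\ d\in1+\mathfrak{p}_\mathrm{F}^m\}$. Cuspidal representation of $\mathrm{GL}_n(k_\mathrm{F})$: irreducible with no nonzero vectors fixed by the unipotent radical of any proper parabolic subgroup. $\mathcal{C}_n$ is the set of matrices $$\begin{pmatrix}\varpi_\mathrm{F}^{\alpha_{n-1}}&&&&\\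 &\varpi_\mathrm{F}^{\alpha_{n-2}}&&&\\ &&\ddots&&\\ &&&\varpi_\mathrm{F}^{\alpha_1}&\\ \tilde v_{n-1}&\tilde v_{n-2}&\cdots&\tilde v_1&1\end{pmatrix}$$ with integers $0\leqslant\alpha_1\leqslant\dots\leqslant\alpha_{n-1}$, $v_i\in\mathfrak{o}_\mathrm{F}/\mathfrak{p}_\mathrm{F}^m$ with fixed lifts $\tilde v_i\in\mathfrak{o}_\mathrm{F}$ ($\tilde 0=0$), and for each $i$ either $\tilde v_i=0$ or $\mathrm{val}_\mathrm{F}(\tilde v_i)<\alpha_i$. *)

theory Defs
  imports "Jordan_Normal_Form.Determinant" "HOL-Computational_Algebra.Polynomial"
begin

text \<open>The normalized valuation is a function val :: 'f => int; its value at 0 is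
irrelevant (val 0 = infinity is encoded by the disjunct x = 0 below).\<close>

definition in_pow :: "('f::field \<Rightarrow> int) \<Rightarrow> int \<Rightarrow> 'f \<Rightarrow> bool" where
  "in_pow val m x \<longleftrightarrow> x = 0 \<or> m \<le> val x"

abbreviation in_int :: "('f::field \<Rightarrow> int) \<Rightarrow> 'f \<Rightarrow> bool" where
  "in_int val x \<equiv> in_pow val 0 x"

text \<open>F is a non-archimedean local field with normalized valuation val, and
red : o_F -> k is the reduction map onto the (finite) residue field k = k_F.\<close>
definition nonarch_local_field :: "('f::field \<Rightarrow> int) \<Rightarrow> ('f \<Rightarrow> 'k::{field,finite}) \<Rightarrow> bool" where
  "nonarch_local_field val red \<longleftrightarrow>
     (\<forall>x y. x \<noteq> 0 \<longrightarrow> y \<noteq> 0 \<longrightarrow> val (x * y) = val x + val y) \<and>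
     (\<forall>x y. x \<noteq> 0 \<longrightarrow> y \<noteq> 0 \<longrightarrow> x + y \<noteq> 0 \<longrightarrow> min (val x) (val y) \<le> val (x + y)) \<and>
     (\<exists>\<pi>. \<pi> \<noteq> 0 \<and> val \<pi> = 1) \<and>
     (\<forall>a :: nat \<Rightarrow> 'f. (\<forall>N. \<exists>M. \<forall>i\<ge>M. \<forall>j\<ge>M. in_pow val N (a i - a j)) \<longrightarrow>
        (\<exists>L. \<forall>N. \<exists>M. \<forall>i\<ge>M. in_pow val N (a i - L))) \<and>
     (\<forall>x y. in_int val x \<longrightarrow> in_int val y \<longrightarrow> red (x + y) = red x + red y) \<and>
     (\<forall>x y. in_int val x \<longrightarrow> in_int val y \<longrightarrow> red (x * y) = red x * red y) \<and>
     red 1 = 1 \<and>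
     (\<forall>z. \<exists>x. in_int val x \<and> red x = z) \<and>
     (\<forall>x. in_int val x \<longrightarrow> (red x = 0 \<longleftrightarrow> in_pow val 1 x))"

definition K :: "('f::field \<Rightarrow> int) \<Rightarrow> nat \<Rightarrow> 'f mat set" where
  "K val n = {A \<in> carrier_mat n n. (\<forall>i<n. \<forall>j<n. in_int val (A $$ (i,j))) \<and>
                 det A \<noteq> 0 \<and> val (det A) = 0}"

definition Km :: "('f::field \<Rightarrow> int) \<Rightarrow> nat \<Rightarrow> nat \<Rightarrow> 'f mat set" where
  "Km val n m = {A \<in> K val n. (\<forall>j<n-1. in_pow val (int m) (A $$ (n-1,j))) \<and>
                   in_pow val (int m) (A $$ (n-1,n-1) - 1)}"

definition conj_set :: "nat \<Rightarrow> 'a::comm_ring_1 mat \<Rightarrow> 'a mat set \<Rightarrow> 'a mat set" where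
  "conj_set n g S = {g * s * h | s h. s \<in> S \<and> h \<in> carrier_mat n n \<and> h * g = 1\<^sub>m n}"

definition GL :: "nat \<Rightarrow> 'a::field mat set" where
  "GL n = {A \<in> carrier_mat n n. det A \<noteq> 0}"

text \<open>The matrices of C_n (row/column indices 0..n-1).\<close>
definition Cmat :: "nat \<Rightarrow> 'f::field \<Rightarrow> (nat \<Rightarrow> nat) \<Rightarrow> (nat \<Rightarrow> 'f) \<Rightarrow> 'f mat" where
  "Cmat n \<pi> \<alpha> v = mat n n (\<lambda>(i,j).
      if i < n - 1 then (if j = i then \<pi> ^ \<alpha> (n - 1 - i) else 0)
      else (if j = n - 1 then 1 else v (n - 1 - j)))"

definition is_rep :: "nat \<Rightarrow> ('r::field \<Rightarrow> 'v::ab_group_add \<Rightarrow> 'v) \<Rightarrow> ('k::field mat \<Rightarrow> 'v \<Rightarrow> 'v) \<Rightarrow> bool" where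
  "is_rep n scale \<rho> \<longleftrightarrow> vector_space scale \<and>
     (\<forall>A\<in>GL n. Vector_Spaces.linear scale scale (\<rho> A)) \<and>
     (\<forall>A\<in>GL n. \<forall>B\<in>GL n. \<rho> (A * B) = \<rho> A \<circ> \<rho> B) \<and>
     \<rho> (1\<^sub>m n) = id"

definition irreducible_rep :: "nat \<Rightarrow> ('r::field \<Rightarrow> 'v::ab_group_add \<Rightarrow> 'v) \<Rightarrow> ('k::field mat \<Rightarrow> 'v \<Rightarrow> 'v) \<Rightarrow> bool" where
  "irreducible_rep n scale \<rho> \<longleftrightarrow> is_rep n scale \<rho> \<and> (\<exists>v::'v. v \<noteq> 0) \<and>
     (\<forall>W. module.subspace scale W \<and> (\<forall>A\<in>GL n. \<forall>w\<in>W. \<rho> A w \<in> W) \<longrightarrow> W = {0} \<or> W = UNIV)"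

text \<open>Block index of i for the composition of n with cut points S \<subseteq> {1..n-1}.\<close>
definition blk :: "nat set \<Rightarrow> nat \<Rightarrow> nat" where
  "blk S i = card {s \<in> S. s \<le> i}"

definition std_unip :: "nat \<Rightarrow> nat set \<Rightarrow> 'a::comm_ring_1 mat set" where
  "std_unip n S = {A \<in> carrier_mat n n. \<forall>i<n. \<forall>j<n.
      (blk S i = blk S j \<longrightarrow> A $$ (i,j) = (if i = j then 1 else 0)) \<and>
      (blk S j < blk S i \<longrightarrow> A $$ (i,j) = 0)}"

text \<open>Unipotent radicals of proper parabolic subgroups of GL_n(k): the
GL_n(k)-conjugates of those of proper standard parabolics (S nonempty).\<close>
definition proper_parabolic_unips :: "nat \<Rightarrow> 'a::field mat set set" where
  "proper_parabolic_unips n = {conj_set n g (std_unip n S) | g S.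
      g \<in> GL n \<and> S \<subseteq> {1..<n} \<and> S \<noteq> {}}"

definition cuspidal :: "nat \<Rightarrow> ('r::field \<Rightarrow> 'v::ab_group_add \<Rightarrow> 'v) \<Rightarrow> ('k::field mat \<Rightarrow> 'v \<Rightarrow> 'v) \<Rightarrow> bool" where
  "cuspidal n scale \<rho> \<longleftrightarrow> irreducible_rep n scale \<rho> \<and>
     (\<forall>U \<in> proper_parabolic_unips n. \<forall>v. (\<forall>u\<in>U. \<rho> u v = v) \<longrightarrow> v = 0)"

end

(*
  Let j be the largest column index such that the last row of g has a nonzero
  off-diagonal entry v_(n-1-j) in column j (it exists since g is not diagonal).
  Every matrix u of the unipotent radical U_j of the lower parabolic subgroup with
  diagonal blocks {0..j} and {j+1..n-1} is the reduction of some k in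
  K_n /\ g K_n(m) g^-1: lift the entries of u to o_F and add to row j the lifted
  last row of u times pi^(alpha_(n-1-j)) / v_(n-1-j), an element of p_F.  This
  correction is invisible modulo p_F, but it makes g^-1 k g integral with last row
  (0,...,0,1).  Conjugating by the antidiagonal permutation matrix turns U_j into
  the unipotent radical of a proper standard parabolic, so a cuspidal tau has no
  nonzero vector fixed by U_j, let alone by the reduction of K_n /\ g K_n(m) g^-1.
*)
theory Submission
  imports Defs
begin

section \<open>Valuation and reduction modulo the maximal ideal\<close>

locale local_field =
  fixes val :: "'f::field \<Rightarrow> int" and red :: "'f \<Rightarrow> 'k::{field,finite}"
  assumes nonarch_local_field: "nonarch_local_field val red"
begin

lemma val_mult: "x \<noteq> 0 \<Longrightarrow> y \<noteq> 0 \<Longrightarrow> val (x * y) = val x + val y"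
  using nonarch_local_field unfolding nonarch_local_field_def by blast

lemma val_one: "val 1 = 0"
  using val_mult[of 1 1] by simp

lemma val_divide: "x \<noteq> 0 \<Longrightarrow> y \<noteq> 0 \<Longrightarrow> val (x / y) = val x - val y"
  using val_mult[of "x / y" y] by simp

lemma val_power: "x \<noteq> 0 \<Longrightarrow> val (x ^ k) = int k * val x"
  by (induction k) (auto simp: val_one val_mult algebra_simps)

lemma val_uminus: "val (- x) = val x"
proof (cases "x = 0")
  case False
  have "val (-1 :: 'f) = 0"
    using val_mult[of "-1" "-1"] val_one by simp
  then show ?thesis
    using val_mult[of "-1" x] False by simp
qed simp

lemma in_pow_add: "in_pow val N x \<Longrightarrow> in_pow val N y \<Longrightarrow> in_pow val N (x + y)"
  using nonarch_local_field unfolding nonarch_local_field_def in_pow_def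
  by (metis add.right_neutral add_0 min.bounded_iff order.trans)

lemma in_pow_mult: "in_pow val a x \<Longrightarrow> in_pow val b y \<Longrightarrow> in_pow val (a + b) (x * y)"
  unfolding in_pow_def by (cases "x = 0 \<or> y = 0") (auto simp: val_mult)

lemma in_int_mult: "in_int val x \<Longrightarrow> in_int val y \<Longrightarrow> in_int val (x * y)"
  using in_pow_mult[of 0 x 0 y] by simp

lemma in_pow_uminus: "in_pow val a x \<Longrightarrow> in_pow val a (- x)"
  unfolding in_pow_def by (auto simp: val_uminus)

lemma in_pow_mono: "a \<le> b \<Longrightarrow> in_pow val b x \<Longrightarrow> in_pow val a x"
  unfolding in_pow_def by auto

lemma in_int_of_bool: "in_int val (of_bool b)"
  unfolding in_pow_def by (auto simp: val_one)

lemma in_int_0: "in_int val 0" and in_int_1: "in_int val 1"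
  using in_int_of_bool[of False] in_int_of_bool[of True] by simp_all

lemma in_int_sum: "(\<And>i. i \<in> S \<Longrightarrow> in_int val (f i)) \<Longrightarrow> in_int val (sum f S)"
  by (induction S rule: infinite_finite_induct) (auto intro: in_pow_add simp: in_int_0)

lemma in_int_prod: "(\<And>i. i \<in> S \<Longrightarrow> in_int val (f i)) \<Longrightarrow> in_int val (prod f S)"
  by (induction S rule: infinite_finite_induct) (auto simp: in_int_mult in_int_1)

lemma in_int_signof: "in_int val (signof p :: 'f)"
  unfolding sign_def using in_int_1 in_pow_uminus[of 0 1] by auto

lemma red_add: "in_int val x \<Longrightarrow> in_int val y \<Longrightarrow> red (x + y) = red x + red y"
  using nonarch_local_field unfolding nonarch_local_field_def by blast

lemma red_mult: "in_int val x \<Longrightarrow> in_int val y \<Longrightarrow> red (x * y) = red x * red y"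
  using nonarch_local_field unfolding nonarch_local_field_def by blast

lemma red_one: "red 1 = 1"
  using nonarch_local_field unfolding nonarch_local_field_def by blast

lemma red_surj: "\<exists>x. in_int val x \<and> red x = z"
  using nonarch_local_field unfolding nonarch_local_field_def by blast

lemma red_eq_0_iff: "in_int val x \<Longrightarrow> red x = 0 \<longleftrightarrow> in_pow val 1 x"
  using nonarch_local_field unfolding nonarch_local_field_def by blast

lemma red_zero: "red 0 = 0"
  using red_eq_0_iff[of 0] by (simp add: in_pow_def)

lemma red_of_bool: "red (of_bool b) = of_bool b"
  by (simp add: red_zero red_one)

lemma red_uminus: "in_int val x \<Longrightarrow> red (- x) = - red x"
  using red_add[of x "- x"] in_pow_uminus[of 0 x] red_zero by (metis add.right_inverse minus_unique)

lemma red_signof: "red (signof p) = signof p"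
  unfolding sign_def using red_one red_uminus[of 1] in_int_1 by auto

lemma red_sum: "(\<And>i. i \<in> S \<Longrightarrow> in_int val (f i)) \<Longrightarrow> red (sum f S) = (\<Sum>i\<in>S. red (f i))"
  by (induction S rule: infinite_finite_induct) (auto simp: red_zero red_add in_int_sum)

lemma red_prod: "(\<And>i. i \<in> S \<Longrightarrow> in_int val (f i)) \<Longrightarrow> red (prod f S) = (\<Prod>i\<in>S. red (f i))"
  by (induction S rule: infinite_finite_induct) (auto simp: red_one red_mult in_int_prod)

lemma in_int_det_and_red_det:
  assumes A: "A \<in> carrier_mat n n" and A_int: "\<And>i j. i < n \<Longrightarrow> j < n \<Longrightarrow> in_int val (A $$ (i,j))"
  shows "in_int val (det A)" "red (det A) = det (map_mat red A)"
proof -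
  let ?summand = "\<lambda>p. signof p * (\<Prod>i = 0..<n. A $$ (i, p i))"
  have summand: "in_int val (\<Prod>i = 0..<n. A $$ (i, p i))" "in_int val (?summand p)"
    "red (?summand p) = signof p * (\<Prod>i = 0..<n. map_mat red A $$ (i, p i))"
    if "p permutes {0..<n}" for p
  proof -
    have p_lt: "i < n \<Longrightarrow> p i < n" for i
      using that by (auto dest: permutes_in_image)
    show prod_int: "in_int val (\<Prod>i = 0..<n. A $$ (i, p i))"
      by (rule in_int_prod) (use A_int p_lt in auto)
    show "in_int val (?summand p)"
      by (rule in_int_mult[OF in_int_signof prod_int])
    have "red (\<Prod>i = 0..<n. A $$ (i, p i)) = (\<Prod>i = 0..<n. map_mat red A $$ (i, p i))"
      by (subst red_prod) (use A A_int p_lt in auto)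
    then show "red (?summand p) = signof p * (\<Prod>i = 0..<n. map_mat red A $$ (i, p i))"
      by (simp add: red_mult[OF in_int_signof prod_int] red_signof)
  qed
  show "in_int val (det A)"
    unfolding det_def'[OF A] by (rule in_int_sum) (use summand in auto)
  have "red (det A) = (\<Sum>p | p permutes {0..<n}. signof p * (\<Prod>i = 0..<n. map_mat red A $$ (i, p i)))"
    unfolding det_def'[OF A] by (subst red_sum) (use summand in auto)
  also have "\<dots> = det (map_mat red A)"
    using A by (simp add: det_def')
  finally show "red (det A) = det (map_mat red A)" .
qed

lemma K_iff_red_invertible:
  assumes A: "A \<in> carrier_mat n n" and A_int: "\<And>i j. i < n \<Longrightarrow> j < n \<Longrightarrow> in_int val (A $$ (i,j))"
  shows "A \<in> K val n \<longleftrightarrow> map_mat red A \<in> GL n"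
proof -
  note det = in_int_det_and_red_det[OF A A_int]
  have "det A \<noteq> 0 \<and> val (det A) = 0 \<longleftrightarrow> red (det A) \<noteq> 0"
    using det(1) red_eq_0_iff[OF det(1)] red_zero unfolding in_pow_def by auto
  then show ?thesis
    using A A_int det(2) unfolding K_def GL_def by auto
qed

lemma red_K_subset_GL: "map_mat red ` K val n \<subseteq> GL n"
proof
  fix h
  assume "h \<in> map_mat red ` K val n"
  then obtain A where A: "A \<in> K val n" and h: "h = map_mat red A"
    by blast
  then have "A \<in> carrier_mat n n" "\<And>i l. i < n \<Longrightarrow> l < n \<Longrightarrow> in_int val (A $$ (i,l))"
    unfolding K_def by auto
  then show "h \<in> GL n"
    using K_iff_red_invertible A h by blast
qed

end

lemma index_mult_mat_sum:
  assumes "A \<in> carrier_mat n n" "B \<in> carrier_mat n n" "i < n" "l < n"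
  shows "(A * B) $$ (i,l) = (\<Sum>t = 0..<n. A $$ (i,t) * B $$ (t,l))"
  using assms by (simp add: scalar_prod_def)

lemma conj_setI:
  fixes g :: "'a::field mat"
  assumes g: "g \<in> carrier_mat n n" "det g \<noteq> 0" and k: "k \<in> carrier_mat n n"
    and "s \<in> S" and gs: "g * s = k * g"
  shows "k \<in> conj_set n g S"
proof -
  obtain h where h: "h \<in> carrier_mat n n" "g * h = 1\<^sub>m n" "h * g = 1\<^sub>m n"
    using det_non_zero_imp_unit[OF g, of undefined] unfolding Units_def ring_mat_def by auto
  have "g * s * h = k"
    using assoc_mult_mat[OF k g(1) h(1)] k by (simp add: gs h(2))
  then show ?thesis
    unfolding conj_set_def using \<open>s \<in> S\<close> h by blast
qed

section \<open>Unipotent radicals\<close>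

definition exchange_mat :: "nat \<Rightarrow> 'a::comm_ring_1 mat" where
  "exchange_mat n = mat n n (\<lambda>(i,l). of_bool (i + l = n - 1))"

lemma exchange_mat_carrier [simp]: "exchange_mat n \<in> carrier_mat n n"
  by (simp add: exchange_mat_def)

lemma mult_exchange_mat_index:
  assumes "A \<in> carrier_mat n n" "i < n" "l < n"
  shows "(exchange_mat n * A) $$ (i,l) = A $$ (n - 1 - i, l)"
    and "(A * exchange_mat n) $$ (i,l) = A $$ (i, n - 1 - l)"
proof -
  have "{0..<n} \<inter> {t. i + t = n - 1} = {n - 1 - i}" "{0..<n} \<inter> {t. t + l = n - 1} = {n - 1 - l}"
    using assms by auto
  then show "(exchange_mat n * A) $$ (i,l) = A $$ (n - 1 - i, l)"
    and "(A * exchange_mat n) $$ (i,l) = A $$ (i, n - 1 - l)"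
    using assms by (auto simp: exchange_mat_def scalar_prod_def)
qed

lemma exchange_mat_squared: "exchange_mat n * exchange_mat n = (1\<^sub>m n :: 'a::comm_ring_1 mat)"
proof (rule eq_matI)
  fix i l
  assume "i < dim_row (1\<^sub>m n :: 'a mat)" "l < dim_col (1\<^sub>m n :: 'a mat)"
  then have "i < n" "l < n"
    by auto
  then show "(exchange_mat n * exchange_mat n) $$ (i,l) = (1\<^sub>m n :: 'a mat) $$ (i,l)"
    by (subst mult_exchange_mat_index(1)) (auto simp: exchange_mat_def)
qed (auto simp: exchange_mat_def)

lemma exchange_mat_GL: "(exchange_mat n :: 'a::field mat) \<in> GL n"
proof -
  have "det (exchange_mat n :: 'a mat) * det (exchange_mat n :: 'a mat) = 1"
    using det_mult[OF exchange_mat_carrier exchange_mat_carrier, of n] by (simp add: exchange_mat_squared)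
  then show ?thesis
    unfolding GL_def by auto
qed

lemma left_inverse_exchange_mat:
  assumes h: "h \<in> carrier_mat n n" and "h * exchange_mat n = 1\<^sub>m n"
  shows "h = exchange_mat n"
proof -
  have "h = h * (exchange_mat n * exchange_mat n)"
    using h by (simp add: exchange_mat_squared)
  also have "\<dots> = (h * exchange_mat n) * exchange_mat n"
    using assoc_mult_mat[OF h exchange_mat_carrier exchange_mat_carrier] by simp
  also have "\<dots> = exchange_mat n"
    using assms(2) left_mult_one_mat[OF exchange_mat_carrier] by simp
  finally show ?thesis .
qed

lemma blk_singleton: "blk {c} x = of_bool (c \<le> x)"
proof -
  have "{s \<in> {c}. s \<le> x} = (if c \<le> x then {c} else {})"
    by auto
  then show ?thesis
    unfolding blk_def by simp
qed

definition lower_block_unip :: "nat \<Rightarrow> nat \<Rightarrow> 'a::comm_ring_1 mat set" where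
  "lower_block_unip n j = {u \<in> carrier_mat n n.
     \<forall>i<n. \<forall>l<n. \<not> (l \<le> j \<and> j < i) \<longrightarrow> u $$ (i,l) = of_bool (i = l)}"

lemma exchange_conj_std_unip_subset:
  assumes j: "j < n - 1"
  shows "conj_set n (exchange_mat n) (std_unip n {n - 1 - j}) \<subseteq> (lower_block_unip n j :: 'a::comm_ring_1 mat set)"
proof
  fix u :: "'a mat"
  assume "u \<in> conj_set n (exchange_mat n) (std_unip n {n - 1 - j})"
  then obtain s h where u: "u = exchange_mat n * s * h" and s: "s \<in> std_unip n {n - 1 - j}"
    and h: "h \<in> carrier_mat n n" "h * exchange_mat n = 1\<^sub>m n"
    unfolding conj_set_def by blast
  have sc: "s \<in> carrier_mat n n"
    using s unfolding std_unip_def by auto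
  have uc: "u \<in> carrier_mat n n"
    unfolding u using sc h(1) by (blast intro: mult_carrier_mat exchange_mat_carrier)
  have u_index: "u $$ (i,l) = s $$ (n - 1 - i, n - 1 - l)" if "i < n" "l < n" for i l
  proof -
    have "exchange_mat n * s \<in> carrier_mat n n"
      using sc by (blast intro: mult_carrier_mat exchange_mat_carrier)
    then show ?thesis
      using that sc by (simp add: u left_inverse_exchange_mat[OF h] mult_exchange_mat_index)
  qed
  have "u $$ (i,l) = of_bool (i = l)" if il: "i < n" "l < n" "\<not> (l \<le> j \<and> j < i)" for i l
  proof -
    have blk_rev: "blk {n - 1 - j} (n - 1 - x) = of_bool (x \<le> j)" if "x < n" for x
      using that j by (auto simp: blk_singleton)
    have "n - 1 - i < n" "n - 1 - l < n" "(n - 1 - i = n - 1 - l) = (i = l)"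
      using il by auto
    then show ?thesis
      using s il u_index[OF il(1,2)] blk_rev[OF il(1)] blk_rev[OF il(2)]
      unfolding std_unip_def by (cases "i \<le> j \<longleftrightarrow> l \<le> j") auto
  qed
  then show "u \<in> lower_block_unip n j"
    unfolding lower_block_unip_def using uc by blast
qed

lemma lower_block_unip_contains_proper_parabolic_unip:
  assumes "j < n - 1"
  shows "\<exists>U \<in> proper_parabolic_unips n. U \<subseteq> (lower_block_unip n j :: 'a::field mat set)"
proof -
  have "conj_set n (exchange_mat n) (std_unip n {n - 1 - j}) \<in> (proper_parabolic_unips n :: 'a mat set set)"
    unfolding proper_parabolic_unips_def using assms exchange_mat_GL by fastforce
  then show ?thesis
    using exchange_conj_std_unip_subset[OF assms] by blast
qed

lemma det_lower_block_unip:
  assumes "u \<in> lower_block_unip n j"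
  shows "det u = 1"
proof -
  have u: "u \<in> carrier_mat n n" "\<And>i l. i < n \<Longrightarrow> l < n \<Longrightarrow> \<not> (l \<le> j \<and> j < i) \<Longrightarrow> u $$ (i,l) = of_bool (i = l)"
    using assms unfolding lower_block_unip_def by auto
  have "det u = prod_list (diag_mat u)"
    by (rule det_lower_triangular[OF _ u(1)]) (use u(2) in auto)
  also have "\<dots> = 1"
    using u by (simp add: prod_list_diag_prod)
  finally show ?thesis .
qed

lemma Cmat_carrier [simp]: "Cmat n \<pi> \<alpha> v \<in> carrier_mat n n"
  by (simp add: Cmat_def)

lemma Cmat_index:
  assumes "i < n" "l < n"
  shows "Cmat n \<pi> \<alpha> v $$ (i,l) = (if i < n - 1 then (if l = i then \<pi> ^ \<alpha> (n - 1 - i) else 0)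
      else (if l = n - 1 then 1 else v (n - 1 - l)))"
  using assms by (simp add: Cmat_def)

lemma det_Cmat_nonzero:
  assumes "\<pi> \<noteq> 0"
  shows "det (Cmat n \<pi> \<alpha> v) \<noteq> 0"
proof -
  have "det (Cmat n \<pi> \<alpha> v) = prod_list (diag_mat (Cmat n \<pi> \<alpha> v))"
    by (rule det_lower_triangular[OF _ Cmat_carrier]) (auto simp: Cmat_index)
  also have "\<dots> = (\<Prod>i = 0..<n. Cmat n \<pi> \<alpha> v $$ (i,i))"
    by (simp add: prod_list_diag_prod Cmat_def)
  also have "\<dots> \<noteq> 0"
    using assms by (auto simp: Cmat_index)
  finally show ?thesis .
qed

lemma Cmat_mult_index_upper:
  assumes A: "A \<in> carrier_mat n n" and il: "i < n - 1" "l < n"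
  shows "(Cmat n \<pi> \<alpha> v * A) $$ (i,l) = \<pi> ^ \<alpha> (n - 1 - i) * A $$ (i,l)"
proof -
  have "(Cmat n \<pi> \<alpha> v * A) $$ (i,l) = (\<Sum>t = 0..<n. Cmat n \<pi> \<alpha> v $$ (i,t) * A $$ (t,l))"
    using il by (intro index_mult_mat_sum[OF Cmat_carrier A]) auto
  also have "\<dots> = (\<Sum>t = 0..<n. if t = i then \<pi> ^ \<alpha> (n - 1 - i) * A $$ (i,l) else 0)"
    using il by (intro sum.cong) (auto simp: Cmat_index)
  also have "\<dots> = \<pi> ^ \<alpha> (n - 1 - i) * A $$ (i,l)"
    using il by simp
  finally show ?thesis .
qed

lemma Cmat_mult_index_last:
  assumes A: "A \<in> carrier_mat n n" and l: "l < n"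
  shows "(Cmat n \<pi> \<alpha> v * A) $$ (n - 1,l) = A $$ (n - 1,l) + (\<Sum>t = 0..<n - 1. v (n - 1 - t) * A $$ (t,l))"
proof -
  have indices: "{0..<n} = insert (n - 1) {0..<n - 1}"
    using l by auto
  have "(Cmat n \<pi> \<alpha> v * A) $$ (n - 1,l) = (\<Sum>t = 0..<n. Cmat n \<pi> \<alpha> v $$ (n - 1,t) * A $$ (t,l))"
    using l by (intro index_mult_mat_sum[OF Cmat_carrier A]) auto
  also have "\<dots> = Cmat n \<pi> \<alpha> v $$ (n - 1,n - 1) * A $$ (n - 1,l) +
      (\<Sum>t = 0..<n - 1. Cmat n \<pi> \<alpha> v $$ (n - 1,t) * A $$ (t,l))"
    by (simp add: indices)
  also have "Cmat n \<pi> \<alpha> v $$ (n - 1,n - 1) = 1"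
    using l by (simp add: Cmat_index)
  also have "(\<Sum>t = 0..<n - 1. Cmat n \<pi> \<alpha> v $$ (n - 1,t) * A $$ (t,l)) =
      (\<Sum>t = 0..<n - 1. v (n - 1 - t) * A $$ (t,l))"
    by (intro sum.cong) (auto simp: Cmat_index)
  finally show ?thesis
    by simp
qed

lemma mult_Cmat_index_upper:
  assumes A: "A \<in> carrier_mat n n" and il: "i < n" "l < n - 1"
  shows "(A * Cmat n \<pi> \<alpha> v) $$ (i,l) = A $$ (i,l) * \<pi> ^ \<alpha> (n - 1 - l) + A $$ (i,n - 1) * v (n - 1 - l)"
proof -
  have indices: "{0..<n} = insert (n - 1) {0..<n - 1}"
    using il by auto
  have "(A * Cmat n \<pi> \<alpha> v) $$ (i,l) = (\<Sum>t = 0..<n. A $$ (i,t) * Cmat n \<pi> \<alpha> v $$ (t,l))"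
    using il by (intro index_mult_mat_sum[OF A Cmat_carrier]) auto
  also have "\<dots> = A $$ (i,n - 1) * Cmat n \<pi> \<alpha> v $$ (n - 1,l) +
      (\<Sum>t = 0..<n - 1. A $$ (i,t) * Cmat n \<pi> \<alpha> v $$ (t,l))"
    by (simp add: indices)
  also have "Cmat n \<pi> \<alpha> v $$ (n - 1,l) = v (n - 1 - l)"
    using il by (simp add: Cmat_index)
  also have "(\<Sum>t = 0..<n - 1. A $$ (i,t) * Cmat n \<pi> \<alpha> v $$ (t,l)) =
      (\<Sum>t = 0..<n - 1. if t = l then A $$ (i,l) * \<pi> ^ \<alpha> (n - 1 - l) else 0)"
    using il by (intro sum.cong) (auto simp: Cmat_index)
  also have "\<dots> = A $$ (i,l) * \<pi> ^ \<alpha> (n - 1 - l)"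
    using il by simp
  finally show ?thesis
    by simp
qed

lemma mult_Cmat_index_last:
  assumes A: "A \<in> carrier_mat n n" and i: "i < n"
  shows "(A * Cmat n \<pi> \<alpha> v) $$ (i,n - 1) = A $$ (i,n - 1)"
proof -
  have "(A * Cmat n \<pi> \<alpha> v) $$ (i,n - 1) = (\<Sum>t = 0..<n. A $$ (i,t) * Cmat n \<pi> \<alpha> v $$ (t,n - 1))"
    using i by (intro index_mult_mat_sum[OF A Cmat_carrier]) auto
  also have "\<dots> = (\<Sum>t = 0..<n. if t = n - 1 then A $$ (i,n - 1) else 0)"
    by (intro sum.cong) (auto simp: Cmat_index)
  also have "\<dots> = A $$ (i,n - 1)"
    using i by simp
  finally show ?thesis .
qed

lemma Cmat_not_diagonal_last_row:
  assumes "\<not> (\<forall>i<n. \<forall>l<n. i \<noteq> l \<longrightarrow> Cmat n \<pi> \<alpha> v $$ (i,l) = 0)"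
  obtains j where "j < n - 1" "v (n - 1 - j) \<noteq> 0" "\<forall>l. j < l \<and> l < n - 1 \<longrightarrow> v (n - 1 - l) = 0"
proof -
  define S where "S = {l. l < n - 1 \<and> v (n - 1 - l) \<noteq> 0}"
  obtain i l where "i < n" "l < n" "i \<noteq> l" "Cmat n \<pi> \<alpha> v $$ (i,l) \<noteq> 0"
    using assms by blast
  then have "l \<in> S"
    unfolding S_def by (auto simp: Cmat_index split: if_splits)
  moreover have "finite S"
    unfolding S_def by simp
  ultimately have max: "Max S \<in> S" "\<And>l. l \<in> S \<Longrightarrow> l \<le> Max S"
    using Max_in[of S] Max_ge[of S] by blast+
  show thesis
  proof (rule that[of "Max S"])
    show "Max S < n - 1" "v (n - 1 - Max S) \<noteq> 0"
      using max(1) unfolding S_def by auto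
    show "\<forall>l. Max S < l \<and> l < n - 1 \<longrightarrow> v (n - 1 - l) = 0"
      using max(2) unfolding S_def by fastforce
  qed
qed

section \<open>Lifting lower unipotent matrices\<close>

locale Cmat_lifting = local_field val red
  for val :: "'f::field \<Rightarrow> int" and red :: "'f \<Rightarrow> 'k::{field,finite}" +
  fixes n j :: nat and \<pi> :: 'f and \<alpha> :: "nat \<Rightarrow> nat" and v :: "nat \<Rightarrow> 'f"
    and u :: "'k mat" and X :: "nat \<Rightarrow> nat \<Rightarrow> 'f"
  assumes uniformizer: "\<pi> \<noteq> 0" "val \<pi> = 1"
    and alpha_mono: "\<forall>i j. 1 \<le> i \<longrightarrow> i \<le> j \<longrightarrow> j \<le> n - 1 \<longrightarrow> \<alpha> i \<le> \<alpha> j"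
    and v_lift: "\<forall>i\<in>{1..n-1}. in_int val (v i) \<and> (v i = 0 \<or> val (v i) < int (\<alpha> i))"
    and j: "j < n - 1"
    and v_j: "v (n - 1 - j) \<noteq> 0"
    and v_above_j: "\<forall>l. j < l \<and> l < n - 1 \<longrightarrow> v (n - 1 - l) = 0"
    and u: "u \<in> lower_block_unip n j"
    and X: "\<forall>i l. in_int val (X i l) \<and> red (X i l) = u $$ (i,l)"
begin

text \<open>lift_conj is g^-1 * lift * g for g = Cmat n \<pi> \<alpha> v (Cmat_mult_lift_conj).  Since corr
  lies in p_F, the correction in row j of lift_dev does not change the reduction of lift.\<close>

definition corr :: 'f where
  "corr = \<pi> ^ \<alpha> (n - 1 - j) / v (n - 1 - j)"

definition lift_dev :: "nat \<Rightarrow> nat \<Rightarrow> 'f" where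
  "lift_dev i l = (if l \<le> j \<and> j < i then X i l else if i = j \<and> l \<le> j then X (n - 1) l * corr else 0)"

definition lift :: "'f mat" where
  "lift = mat n n (\<lambda>(i,l). of_bool (i = l) + lift_dev i l)"

definition lift_conj :: "'f mat" where
  "lift_conj = mat n n (\<lambda>(i,l). of_bool (i = l) +
     (if i < n - 1 then lift_dev i l * \<pi> ^ \<alpha> (n - 1 - l) / \<pi> ^ \<alpha> (n - 1 - i) else 0))"

lemma val_pi_power: "val (\<pi> ^ e) = int e"
  using val_power[OF uniformizer(1)] uniformizer(2) by simp

lemma pi_power_int: "in_int val (\<pi> ^ e)"
  unfolding in_pow_def using val_pi_power by simp

lemma corr_in_p: "in_pow val 1 corr"
proof -
  have "n - 1 - j \<in> {1..n-1}"
    using j by auto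
  then have "val (v (n - 1 - j)) < int (\<alpha> (n - 1 - j))"
    using v_lift v_j by auto
  moreover have "val corr = int (\<alpha> (n - 1 - j)) - val (v (n - 1 - j))"
    unfolding corr_def using val_divide v_j uniformizer(1) val_pi_power by simp
  ultimately show ?thesis
    unfolding in_pow_def by simp
qed

lemma corr_row_in_p: "in_int val (X (n - 1) l * corr)" "in_pow val 1 (X (n - 1) l * corr)"
  using in_pow_mult[of 0 "X (n - 1) l" 1 corr] X corr_in_p in_pow_mono[of 0 1] by auto

lemma lift_dev_int: "in_int val (lift_dev i l)"
  unfolding lift_dev_def using X corr_row_in_p in_int_0 by auto

lemma red_lift_dev: "red (lift_dev i l) = (if l \<le> j \<and> j < i then u $$ (i,l) else 0)"
  unfolding lift_dev_def using X corr_row_in_p red_eq_0_iff red_zero by auto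

lemma lift_dev_last_col: "lift_dev i (n - 1) = 0"
  unfolding lift_dev_def using j by auto

lemma lift_dev_lower: "lift_dev i l \<noteq> 0 \<Longrightarrow> l \<le> i"
  unfolding lift_dev_def by (auto split: if_splits)

lemma lift_carrier: "lift \<in> carrier_mat n n"
  and lift_conj_carrier: "lift_conj \<in> carrier_mat n n"
  unfolding lift_def lift_conj_def by auto

lemma lift_index: "i < n \<Longrightarrow> l < n \<Longrightarrow> lift $$ (i,l) = of_bool (i = l) + lift_dev i l"
  unfolding lift_def by simp

lemma lift_conj_index: "i < n \<Longrightarrow> l < n \<Longrightarrow> lift_conj $$ (i,l) = of_bool (i = l) +
     (if i < n - 1 then lift_dev i l * \<pi> ^ \<alpha> (n - 1 - l) / \<pi> ^ \<alpha> (n - 1 - i) else 0)"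
  unfolding lift_conj_def by simp

lemma lift_int: "i < n \<Longrightarrow> l < n \<Longrightarrow> in_int val (lift $$ (i,l))"
  using in_pow_add[OF in_int_of_bool lift_dev_int] by (simp add: lift_index)

lemma red_lift: "map_mat red lift = u"
proof (rule eq_matI)
  fix i l
  assume "i < dim_row u" "l < dim_col u"
  then have il: "i < n" "l < n"
    using u unfolding lower_block_unip_def by auto
  have "map_mat red lift $$ (i,l) = red (of_bool (i = l) + lift_dev i l)"
    using il lift_carrier by (simp add: lift_index)
  also have "\<dots> = of_bool (i = l) + (if l \<le> j \<and> j < i then u $$ (i,l) else 0)"
    by (simp only: red_add[OF in_int_of_bool lift_dev_int] red_of_bool red_lift_dev)
  also have "\<dots> = u $$ (i,l)"
    using u il unfolding lower_block_unip_def by auto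
  finally show "map_mat red lift $$ (i,l) = u $$ (i,l)" .
qed (use u lift_carrier in \<open>auto simp: lower_block_unip_def\<close>)

lemma lift_in_K: "lift \<in> K val n"
  using K_iff_red_invertible[OF lift_carrier lift_int] det_lower_block_unip[OF u] u
  unfolding red_lift GL_def lower_block_unip_def by auto

lemma lift_conj_last_row: "l < n \<Longrightarrow> lift_conj $$ (n - 1, l) = of_bool (l = n - 1)"
  using j by (auto simp: lift_conj_index)

lemma lift_conj_int:
  assumes il: "i < n" "l < n"
  shows "in_int val (lift_conj $$ (i,l))"
proof -
  have "in_int val (lift_dev i l * \<pi> ^ \<alpha> (n - 1 - l) / \<pi> ^ \<alpha> (n - 1 - i))" if "i < n - 1"
  proof (cases "lift_dev i l = 0")
    case False
    then have "l \<le> i"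
      by (rule lift_dev_lower)
    then have "\<alpha> (n - 1 - i) \<le> \<alpha> (n - 1 - l)"
      using alpha_mono[rule_format, of "n - 1 - i" "n - 1 - l"] that by simp
    then have "lift_dev i l * \<pi> ^ \<alpha> (n - 1 - l) / \<pi> ^ \<alpha> (n - 1 - i) =
        lift_dev i l * \<pi> ^ (\<alpha> (n - 1 - l) - \<alpha> (n - 1 - i))"
      using uniformizer(1) by (simp add: power_diff)
    then show ?thesis
      using in_int_mult[OF lift_dev_int pi_power_int] by simp
  qed (simp add: in_int_0)
  then show ?thesis
    using in_pow_add[OF in_int_of_bool] in_int_of_bool il by (auto simp: lift_conj_index)
qed

lemma last_row_sum_lift_conj:
  assumes l: "l < n"
  shows "(\<Sum>t = 0..<n - 1. v (n - 1 - t) * lift_conj $$ (t,l)) =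
    of_bool (l < n - 1) * v (n - 1 - l) + of_bool (l \<le> j) * X (n - 1) l * \<pi> ^ \<alpha> (n - 1 - l)"
proof -
  define f where "f t = v (n - 1 - t) * lift_dev t l * \<pi> ^ \<alpha> (n - 1 - l) / \<pi> ^ \<alpha> (n - 1 - t)" for t
  have "(\<Sum>t = 0..<n - 1. v (n - 1 - t) * lift_conj $$ (t,l)) =
      (\<Sum>t = 0..<n - 1. of_bool (t = l) * v (n - 1 - t)) + sum f {0..<n - 1}"
    using l by (simp add: lift_conj_index f_def sum.distrib algebra_simps)
  also have "(\<Sum>t = 0..<n - 1. of_bool (t = l) * v (n - 1 - t)) = of_bool (l < n - 1) * v (n - 1 - l)"
    by (simp add: of_bool_def if_distrib[of "\<lambda>x. x * _"] cong: if_cong)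
  also have "sum f {0..<n - 1} = f j + sum f ({0..<n - 1} - {j})"
    using j by (intro sum.remove) auto
  also have "sum f ({0..<n - 1} - {j}) = 0"
    using v_above_j by (intro sum.neutral) (auto simp: f_def lift_dev_def)
  also have "f j = of_bool (l \<le> j) * X (n - 1) l * \<pi> ^ \<alpha> (n - 1 - l)"
    using v_j uniformizer(1) by (simp add: f_def lift_dev_def corr_def)
  finally show ?thesis
    by simp
qed

lemma Cmat_mult_lift_conj_index_upper:
  assumes i: "i < n - 1" and l: "l < n"
  shows "(Cmat n \<pi> \<alpha> v * lift_conj) $$ (i,l) = (lift * Cmat n \<pi> \<alpha> v) $$ (i,l)"
proof -
  have last_col: "lift $$ (i, n - 1) = 0" "lift_conj $$ (i, n - 1) = 0"
    using i lift_dev_last_col by (simp_all add: lift_index lift_conj_index)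
  show ?thesis
  proof (cases "l < n - 1")
    case True
    then show ?thesis
      using i l last_col(1) uniformizer(1) lift_carrier lift_conj_carrier
      by (auto simp: Cmat_mult_index_upper mult_Cmat_index_upper lift_index lift_conj_index field_simps)
  next
    case False
    then have "l = n - 1"
      using l by simp
    moreover have "(Cmat n \<pi> \<alpha> v * lift_conj) $$ (i, n - 1) = \<pi> ^ \<alpha> (n - 1 - i) * lift_conj $$ (i, n - 1)"
      using i by (intro Cmat_mult_index_upper[OF lift_conj_carrier]) auto
    moreover have "(lift * Cmat n \<pi> \<alpha> v) $$ (i, n - 1) = lift $$ (i, n - 1)"
      using i by (intro mult_Cmat_index_last[OF lift_carrier]) auto
    ultimately show ?thesis
      using last_col by simp
  qed
qed

lemma Cmat_mult_lift_conj_index_last: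
  assumes l: "l < n"
  shows "(Cmat n \<pi> \<alpha> v * lift_conj) $$ (n - 1,l) = (lift * Cmat n \<pi> \<alpha> v) $$ (n - 1,l)"
proof -
  have "(Cmat n \<pi> \<alpha> v * lift_conj) $$ (n - 1, l) =
      lift_conj $$ (n - 1, l) + (\<Sum>t = 0..<n - 1. v (n - 1 - t) * lift_conj $$ (t,l))"
    by (rule Cmat_mult_index_last[OF lift_conj_carrier l])
  also have "\<dots> = of_bool (l = n - 1) +
      (of_bool (l < n - 1) * v (n - 1 - l) + of_bool (l \<le> j) * X (n - 1) l * \<pi> ^ \<alpha> (n - 1 - l))"
    by (simp only: lift_conj_last_row[OF l] last_row_sum_lift_conj[OF l])
  moreover have "lift $$ (n - 1, l) = of_bool (l = n - 1) + of_bool (l \<le> j) * X (n - 1) l"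
    using l j by (auto simp: lift_index lift_dev_def)
  moreover have "lift $$ (n - 1, n - 1) = 1"
    using j lift_dev_last_col by (simp add: lift_index)
  moreover have "(lift * Cmat n \<pi> \<alpha> v) $$ (n - 1, l) =
      (if l < n - 1 then lift $$ (n - 1, l) * \<pi> ^ \<alpha> (n - 1 - l) + lift $$ (n - 1, n - 1) * v (n - 1 - l)
       else lift $$ (n - 1, n - 1))"
  proof (cases "l < n - 1")
    case True
    then show ?thesis
      using mult_Cmat_index_upper[OF lift_carrier, of "n - 1" l] j by simp
  next
    case False
    then have "l = n - 1"
      using l by simp
    then show ?thesis
      using mult_Cmat_index_last[OF lift_carrier, of "n - 1"] j by simp
  qed
  ultimately show ?thesis
    using l j by auto
qed

lemma Cmat_mult_lift_conj: "Cmat n \<pi> \<alpha> v * lift_conj = lift * Cmat n \<pi> \<alpha> v"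
proof (rule eq_matI)
  fix i l
  assume "i < dim_row (lift * Cmat n \<pi> \<alpha> v)" "l < dim_col (lift * Cmat n \<pi> \<alpha> v)"
  then have "i < n" "l < n"
    using lift_carrier by (auto simp: Cmat_def)
  then show "(Cmat n \<pi> \<alpha> v * lift_conj) $$ (i,l) = (lift * Cmat n \<pi> \<alpha> v) $$ (i,l)"
    using Cmat_mult_lift_conj_index_upper Cmat_mult_lift_conj_index_last
    by (cases "i < n - 1") (auto simp: not_less_iff_gr_or_eq less_diff_conv)
qed (use lift_carrier lift_conj_carrier in \<open>auto simp: Cmat_def\<close>)

lemma lift_conj_in_Km: "lift_conj \<in> Km val n m"
proof -
  have "det (Cmat n \<pi> \<alpha> v) * det lift_conj = det (Cmat n \<pi> \<alpha> v * lift_conj)"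
    by (rule det_mult[symmetric, OF Cmat_carrier lift_conj_carrier])
  also have "\<dots> = det lift * det (Cmat n \<pi> \<alpha> v)"
    unfolding Cmat_mult_lift_conj by (rule det_mult[OF lift_carrier Cmat_carrier])
  finally have "det lift_conj = det lift"
    using det_Cmat_nonzero[OF uniformizer(1)] by (simp add: mult.commute)
  then have "lift_conj \<in> K val n"
    using lift_in_K lift_conj_carrier lift_conj_int unfolding K_def by auto
  then show ?thesis
    unfolding Km_def in_pow_def using lift_conj_last_row j by auto
qed

lemma lift_in_K_inter_conj_Km: "lift \<in> K val n \<inter> conj_set n (Cmat n \<pi> \<alpha> v) (Km val n m)"
  using conj_setI[OF Cmat_carrier det_Cmat_nonzero[OF uniformizer(1)] lift_carrier lift_conj_in_Km
      Cmat_mult_lift_conj] lift_in_K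
  by blast

end

lemma (in local_field) lower_block_unip_subset_red_K_inter_conj_Km:
  assumes "\<pi> \<noteq> 0" "val \<pi> = 1"
    and "\<forall>i j. 1 \<le> i \<longrightarrow> i \<le> j \<longrightarrow> j \<le> n - 1 \<longrightarrow> \<alpha> i \<le> \<alpha> j"
    and "\<forall>i\<in>{1..n-1}. in_int val (v i) \<and> (v i = 0 \<or> val (v i) < int (\<alpha> i))"
    and "j < n - 1" "v (n - 1 - j) \<noteq> 0" "\<forall>l. j < l \<and> l < n - 1 \<longrightarrow> v (n - 1 - l) = 0"
  shows "lower_block_unip n j \<subseteq> map_mat red ` (K val n \<inter> conj_set n (Cmat n \<pi> \<alpha> v) (Km val n m))"
proof
  fix u :: "'k mat"
  assume u: "u \<in> lower_block_unip n j"
  have "\<forall>i l. \<exists>x. in_int val x \<and> red x = u $$ (i,l)"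
    using red_surj by blast
  then obtain X where "\<forall>i l. in_int val (X i l) \<and> red (X i l) = u $$ (i,l)"
    by metis
  then interpret Cmat_lifting val red n j \<pi> \<alpha> v u X
    using assms u by unfold_locales auto
  show "u \<in> map_mat red ` (K val n \<inter> conj_set n (Cmat n \<pi> \<alpha> v) (Km val n m))"
    using red_lift lift_in_K_inter_conj_Km by blast
qed

section \<open>Cuspidality\<close>

lemma cuspidal_invariant_maps_eq_zero:
  fixes scale :: "'r::field \<Rightarrow> 'v::ab_group_add \<Rightarrow> 'v" and \<rho> :: "'k::field mat \<Rightarrow> 'v \<Rightarrow> 'v"
  assumes cusp: "cuspidal n scale \<rho>"
    and U: "U \<in> proper_parabolic_unips n" "U \<subseteq> H" and H: "H \<subseteq> GL n"
  shows "{f :: 'r \<Rightarrow> 'v. Vector_Spaces.linear (*) scale f \<and> (\<forall>h\<in>H. \<forall>x. \<rho> h (f x) = f x)} = {\<lambda>_. 0}"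
proof (intro equalityI subsetI)
  fix f
  assume "f \<in> {f. Vector_Spaces.linear (*) scale f \<and> (\<forall>h\<in>H. \<forall>x. \<rho> h (f x) = f x)}"
  then have "\<forall>u\<in>U. \<rho> u (f x) = f x" for x
    using U(2) by blast
  then have "f x = 0" for x
    using cusp U(1) unfolding cuspidal_def by blast
  then show "f \<in> {\<lambda>_. 0}"
    by auto
next
  fix f :: "'r \<Rightarrow> 'v"
  assume "f \<in> {\<lambda>_. 0}"
  then have f: "f = (\<lambda>_. 0)"
    by simp
  have vs: "vector_space scale" and lin: "\<forall>h\<in>GL n. Vector_Spaces.linear scale scale (\<rho> h)"
    using cusp unfolding cuspidal_def irreducible_rep_def is_rep_def by auto
  have "vector_space ((*) :: 'r \<Rightarrow> 'r \<Rightarrow> 'r)"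
    unfolding vector_space_def by (simp add: algebra_simps)
  moreover have "scale c 0 = 0" for c
  proof -
    have "scale c (0 + 0) = scale c 0 + scale c 0"
      using vs unfolding vector_space_def by blast
    then show ?thesis
      by simp
  qed
  ultimately have "Vector_Spaces.linear (*) scale f"
    unfolding f Vector_Spaces.linear_iff using vs by simp
  moreover have "\<rho> h 0 = 0" if "h \<in> H" for h
  proof -
    have "\<rho> h (0 + 0) = \<rho> h 0 + \<rho> h 0"
      using lin H that unfolding Vector_Spaces.linear_iff by blast
    then show ?thesis
      by simp
  qed
  ultimately show "f \<in> {f. Vector_Spaces.linear (*) scale f \<and> (\<forall>h\<in>H. \<forall>x. \<rho> h (f x) = f x)}"
    using f by simp
qed

theorem proposition4p6:
  fixes val :: "'f::field \<Rightarrow> int"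
    and red :: "'f \<Rightarrow> 'k::{field,finite}"
    and scale :: "'r::field \<Rightarrow> 'v::ab_group_add \<Rightarrow> 'v"
    and \<rho> :: "'k mat \<Rightarrow> 'v \<Rightarrow> 'v"
    and n m :: nat
    and \<pi> :: 'f
    and \<alpha> :: "nat \<Rightarrow> nat"
    and v :: "nat \<Rightarrow> 'f"
  assumes F: "nonarch_local_field val red"
    and R_alg_closed: "\<forall>q :: 'r poly. 1 \<le> degree q \<longrightarrow> (\<exists>x. poly q x = 0)"
    and char_ne: "of_nat CHAR('k) \<noteq> (0 :: 'r)"
    and n: "2 \<le> n" and m: "1 \<le> m"
    and tau: "cuspidal n scale \<rho>"
    and unif: "\<pi> \<noteq> 0" "val \<pi> = 1"
    and alpha_mono: "\<forall>i j. 1 \<le> i \<longrightarrow> i \<le> j \<longrightarrow> j \<le> n - 1 \<longrightarrow> \<alpha> i \<le> \<alpha> j"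
    and v_lift: "\<forall>i\<in>{1..n-1}. in_int val (v i) \<and> (v i = 0 \<or> val (v i) < int (\<alpha> i))"
    and not_diag: "\<not> (\<forall>i<n. \<forall>j<n. i \<noteq> j \<longrightarrow> Cmat n \<pi> \<alpha> v $$ (i,j) = 0)"
  shows "{f :: 'r \<Rightarrow> 'v. Vector_Spaces.linear (*) scale f \<and>
            (\<forall>h \<in> map_mat red ` (K val n \<inter> conj_set n (Cmat n \<pi> \<alpha> v) (Km val n m)).
               \<forall>x. \<rho> h (f x) = f x)} = {\<lambda>_. 0}"
proof -
  interpret local_field val red
    by (rule local_field.intro[OF F])
  let ?H = "map_mat red ` (K val n \<inter> conj_set n (Cmat n \<pi> \<alpha> v) (Km val n m))"
  obtain j where j: "j < n - 1" "v (n - 1 - j) \<noteq> 0" "\<forall>l. j < l \<and> l < n - 1 \<longrightarrow> v (n - 1 - l) = 0"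
    using Cmat_not_diagonal_last_row[OF not_diag] by blast
  obtain U where "U \<in> proper_parabolic_unips n" "U \<subseteq> (lower_block_unip n j :: 'k mat set)"
    using lower_block_unip_contains_proper_parabolic_unip[OF j(1)] by blast
  moreover have "(lower_block_unip n j :: 'k mat set) \<subseteq> ?H"
    by (rule lower_block_unip_subset_red_K_inter_conj_Km[OF unif alpha_mono v_lift j])
  moreover have "?H \<subseteq> GL n"
    using red_K_subset_GL by blast
  ultimately show ?thesis
    using cuspidal_invariant_maps_eq_zero[OF tau] by (meson order_trans)
qed

end
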